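(* Let $p\ge2$ and $A\in GL_n(\mathbb{C}(z))$ be such that the system $\phi_p(Y)=AY$ is regular singular at $0$, $1$ and $\infty$. Then there exists $R\in GL_n(\mathbb{C}(z))$ such that $B:=\phi_p(R)^{-1}AR$ is regular at $0$, $1$ and $\infty$ (i.e. the system $\phi_p(Y)=BY$ is Fuchsian at $0$, $1$ and $\infty$).
   Context: $\phi_p$ acts entrywise by $f(z)\mapsto f(z^p)$. A matrix is regular at $x\in\mathbb{C}$ if its entries are analytic at $x$ and its value at $x$ is invertible; regular at $\infty$ if $A(1/z)$ is regular at $0$. For $x\in\{0,1,\infty\}$ let $K_x$ be $\mathbb{C}(\{z\})$, $\mathbb{C}(\{z-1\})$, $\mathbb{C}(\{1/z\})$ respectively (fields of convergent Laurent series at $x$). The system $\phi_p(Y)=AY$ is regular singular at $x$ if there is $T\in GL_n(K_x)$ such that $\phi_p(T)^{-1}AT$ is regular at $x$. *)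

theory Defs
  imports "HOL-Complex_Analysis.Complex_Analysis"
    "HOL-Computational_Algebra.Polynomial_Factorial"
    "HOL-Computational_Algebra.Normalized_Fraction"
    "HOL-Computational_Algebra.Field_as_Ring"
begin

type_synonym ratfun = "complex poly fract"

text \<open>Evaluation of a rational function at a point, via its reduced representation
  (at poles the value is the junk value of division by zero; only germs matter below).\<close>
definition rf_eval :: "ratfun \<Rightarrow> complex \<Rightarrow> complex" where
  "rf_eval r z = (case quot_of_fract r of (a, b) \<Rightarrow> poly a z / poly b z)"

definition mat_eval :: "ratfun ^'n ^'n \<Rightarrow> complex \<Rightarrow> complex ^'n ^'n" where
  "mat_eval A z = (\<chi> i j. rf_eval (A $ i $ j) z)"

definition phi_rf :: "nat \<Rightarrow> ratfun \<Rightarrow> ratfun" where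
  "phi_rf p r = (case quot_of_fract r of (a, b) \<Rightarrow>
      Fract (pcompose a (monom 1 p)) (pcompose b (monom 1 p)))"

definition phi_mat :: "nat \<Rightarrow> ratfun ^'n ^'n \<Rightarrow> ratfun ^'n ^'n" where
  "phi_mat p A = (\<chi> i j. phi_rf p (A $ i $ j))"

definition germ_regular_at :: "(complex \<Rightarrow> complex ^'n ^'n) \<Rightarrow> complex \<Rightarrow> bool" where
  "germ_regular_at F x \<longleftrightarrow>
     (\<exists>G. (\<forall>i j. (\<lambda>w. G w $ i $ j) analytic_on {x}) \<and> det (G x) \<noteq> 0 \<and>
          eventually (\<lambda>w. F w = G w) (at x))"

definition regular_at :: "ratfun ^'n ^'n \<Rightarrow> complex \<Rightarrow> bool" where
  "regular_at B x \<longleftrightarrow> germ_regular_at (mat_eval B) x"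

definition regular_at_infinity :: "ratfun ^'n ^'n \<Rightarrow> bool" where
  "regular_at_infinity B \<longleftrightarrow> germ_regular_at (\<lambda>w. mat_eval B (1 / w)) 0"

text \<open>Elements of K_x (convergent Laurent series at x) are
  represented by germs of functions meromorphic at x (library notion
  meromorphic_on, i.e. having a convergent Laurent expansion at x).  A matrix
  T over K_x is in GL_n(K_x) iff its determinant is a nonzero germ.
  The parameter c is the coordinate change: c = id for finite points,
  c w = 1/w with local coordinate w at 0 for the point infinity
  (in the coordinate w = 1/z, phi_p acts again by w to w^p).\<close>
definition reg_sing_chart ::
    "nat \<Rightarrow> ratfun ^'n ^'n \<Rightarrow> (complex \<Rightarrow> complex) \<Rightarrow> complex \<Rightarrow> bool" where
  "reg_sing_chart p A c x \<longleftrightarrow>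
     (\<exists>T :: complex \<Rightarrow> complex ^'n ^'n.
        (\<forall>i j. (\<lambda>w. T w $ i $ j) meromorphic_on {x}) \<and>
        \<not> eventually (\<lambda>w. det (T w) = 0) (at x) \<and>
        germ_regular_at (\<lambda>w. matrix_inv (T (w ^ p)) ** mat_eval A (c w) ** T w) x)"

definition regular_singular_at :: "nat \<Rightarrow> ratfun ^'n ^'n \<Rightarrow> complex \<Rightarrow> bool" where
  "regular_singular_at p A x \<longleftrightarrow> reg_sing_chart p A (\<lambda>w. w) x"

definition regular_singular_at_infinity :: "nat \<Rightarrow> ratfun ^'n ^'n \<Rightarrow> bool" where
  "regular_singular_at_infinity p A \<longleftrightarrow> reg_sing_chart p A (\<lambda>w. 1 / w) 0"

end

theory Submission
  imports Defs
begin

(* The transformation T_x witnessing regular singularity at x (x = 0, 1, or infinity in the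
   chart w = 1/z) is meromorphic at x, and only a finite jet of it matters: if the entries of
   T_x^-1 have order at least K at x and R agrees with T_x to order 1 - K, then R = T_x H with
   H holomorphic at x and H(x) = I, and since x^p = x the gauge transform by R is again
   regular at x. So it suffices to find one rational matrix R that agrees with T_0, T_1 and
   T_inf to a common high order. Entrywise, truncate the three Laurent expansions to rational
   functions l_0, l_1, l_inf and glue them as l_1 + e_0 (l_0 - l_1) + e_inf (l_inf - l_1),
   where to high order e_0 is 1 at 0 and 0 at 1 and infinity, and symmetrically for e_inf. *)

no_notation fps_nth (infixl "$" 75)

lemma matrix_inv_right:
  fixes A :: "'a::field ^'n ^'n"
  shows "invertible A \<Longrightarrow> A ** matrix_inv A = mat 1"
  unfolding invertible_def matrix_inv_def by (rule someI2_ex) auto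

lemma matrix_inv_left:
  fixes A :: "'a::field ^'n ^'n"
  shows "invertible A \<Longrightarrow> matrix_inv A ** A = mat 1"
  unfolding invertible_def matrix_inv_def by (rule someI2_ex) auto

lemma matrix_inv_unique:
  fixes A B :: "'a::field ^'n ^'n"
  assumes "A ** B = mat 1"
  shows "matrix_inv A = B"
proof -
  have "invertible A"
    using assms matrix_left_right_inverse by (auto simp: invertible_def)
  have "matrix_inv A = matrix_inv A ** (A ** B)"
    by (simp add: assms)
  also have "\<dots> = (matrix_inv A ** A) ** B"
    by (simp add: matrix_mul_assoc)
  also have "\<dots> = B"
    by (simp add: matrix_inv_left \<open>invertible A\<close>)
  finally show ?thesis .
qed

lemma matrix_inv_mult:
  fixes A B :: "'a::field ^'n ^'n"
  assumes "invertible A" "invertible B"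
  shows "matrix_inv (A ** B) = matrix_inv B ** matrix_inv A"
proof (rule matrix_inv_unique)
  have "A ** B ** (matrix_inv B ** matrix_inv A) = A ** (B ** matrix_inv B) ** matrix_inv A"
    by (simp add: matrix_mul_assoc)
  then show "A ** B ** (matrix_inv B ** matrix_inv A) = mat 1"
    by (simp add: matrix_inv_right assms)
qed

lemma det_conj_matrix_inv:
  fixes G H :: "'a::field ^'n ^'n"
  assumes "invertible H"
  shows "det (matrix_inv H ** G ** H) = det G"
proof -
  have "det (matrix_inv H) * det H = 1"
    using assms by (simp add: matrix_inv_left flip: det_mul)
  then show ?thesis
    by (simp add: det_mul)
qed

lemma matrix_inv_cramer:
  fixes A :: "'a::field ^'n ^'n"
  assumes "det A \<noteq> 0"
  shows "matrix_inv A $ k $ j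
           = det (\<chi> i l. if l = k then (if i = j then 1 else 0) else A $ i $ l) / det A"
proof -
  let ?e = "\<chi> i. if i = j then 1 else (0::'a)"
  have "invertible A"
    using assms by (simp add: invertible_det_nz)
  then have "A *v (matrix_inv A *v ?e) = ?e"
    by (simp add: matrix_vector_mul_assoc matrix_inv_right)
  then have "matrix_inv A *v ?e = (\<chi> k. det (\<chi> i l. if l = k then ?e $ i else A $ i $ l) / det A)"
    using cramer[OF assms] by blast
  moreover have "(matrix_inv A *v ?e) $ k = matrix_inv A $ k $ j"
    by (simp add: matrix_vector_mult_def if_distrib cong: if_cong)
  ultimately show ?thesis
    unfolding vec_lambda_beta by simp
qed

section \<open>Evaluating rational functions and matrices\<close>

definition rf_num :: "ratfun \<Rightarrow> complex poly" where
  "rf_num r = fst (quot_of_fract r)"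

definition rf_den :: "ratfun \<Rightarrow> complex poly" where
  "rf_den r = snd (quot_of_fract r)"

lemma rf_den_nonzero [simp]: "rf_den r \<noteq> 0"
  by (simp add: rf_den_def)

lemma Fract_rf_num_rf_den [simp]: "Fract (rf_num r) (rf_den r) = r"
  by (simp add: rf_num_def rf_den_def)

lemma rf_eval_num_den: "rf_eval r w = poly (rf_num r) w / poly (rf_den r) w"
  by (simp add: rf_eval_def rf_num_def rf_den_def split: prod.splits)

lemma rf_eval_Fract:
  assumes "poly b w \<noteq> 0"
  shows "rf_eval (Fract a b) w = poly a w / poly b w"
proof -
  let ?r = "Fract a b"
  have "b \<noteq> 0" using assms by auto
  moreover have "Fract (rf_num ?r) (rf_den ?r) = Fract a b"
    by (simp only: Fract_rf_num_rf_den)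
  ultimately have cross: "rf_num ?r * b = a * rf_den ?r"
    using eq_fract(1)[OF rf_den_nonzero] by blast
  then have cross_at: "poly (rf_num ?r) w * poly b w = poly a w * poly (rf_den ?r) w"
    by (metis poly_mult)
  have "poly (rf_den ?r) w \<noteq> 0"
  proof
    assume "poly (rf_den ?r) w = 0"
    with cross_at assms have "[:-w, 1:] dvd rf_num ?r" "[:-w, 1:] dvd rf_den ?r"
      by (simp_all add: poly_eq_0_iff_dvd)
    moreover have "coprime (rf_num ?r) (rf_den ?r)"
      using coprime_quot_of_fract[of ?r] by (simp add: rf_num_def rf_den_def)
    ultimately have "is_unit [:-w, 1:]" using coprime_common_divisor by blast
    then show False by (simp add: is_unit_poly_iff)
  qed
  with assms cross_at show ?thesis by (simp add: rf_eval_num_den field_simps)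
qed

lemma eventually_cofinite_poly_nonzero:
  "p \<noteq> 0 \<Longrightarrow> \<forall>\<^sub>F w in cofinite. poly p w \<noteq> (0::complex)"
  by (simp add: eventually_cofinite poly_roots_finite)

lemma eventually_cofinite_rf_den_nonzero: "\<forall>\<^sub>F w in cofinite. poly (rf_den r) w \<noteq> 0"
  by (simp add: eventually_cofinite_poly_nonzero)

(* Evaluation commutes with the ring operations only away from the poles of the operands,
   so these identities hold on a cofinite set. *)
lemma rf_eval_add: "\<forall>\<^sub>F w in cofinite. rf_eval (r + s) w = rf_eval r w + rf_eval s w"
  using eventually_cofinite_rf_den_nonzero[of r] eventually_cofinite_rf_den_nonzero[of s]
proof eventually_elim
  case (elim w)
  have "r + s = Fract (rf_num r * rf_den s + rf_num s * rf_den r) (rf_den r * rf_den s)"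
    by (metis Fract_rf_num_rf_den add_fract rf_den_nonzero)
  moreover have "poly (rf_den r * rf_den s) w \<noteq> 0"
    using elim by simp
  ultimately have "rf_eval (r + s) w =
      poly (rf_num r * rf_den s + rf_num s * rf_den r) w / poly (rf_den r * rf_den s) w"
    by (metis rf_eval_Fract)
  with elim show ?case
    by (simp add: rf_eval_num_den add_frac_eq)
qed

lemma rf_eval_mult: "\<forall>\<^sub>F w in cofinite. rf_eval (r * s) w = rf_eval r w * rf_eval s w"
  using eventually_cofinite_rf_den_nonzero[of r] eventually_cofinite_rf_den_nonzero[of s]
proof eventually_elim
  case (elim w)
  have "r * s = Fract (rf_num r * rf_num s) (rf_den r * rf_den s)"
    by (metis Fract_rf_num_rf_den mult_fract)
  moreover have "poly (rf_den r * rf_den s) w \<noteq> 0"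
    using elim by simp
  ultimately have "rf_eval (r * s) w = poly (rf_num r * rf_num s) w / poly (rf_den r * rf_den s) w"
    by (metis rf_eval_Fract)
  then show ?case
    by (simp add: rf_eval_num_den)
qed

lemma rf_eval_uminus: "rf_eval (- r) w = - rf_eval r w"
  by (simp add: rf_eval_def quot_of_fract_uminus split: prod.splits)

lemma rf_eval_diff: "\<forall>\<^sub>F w in cofinite. rf_eval (r - s) w = rf_eval r w - rf_eval s w"
  using rf_eval_add[of r "- s"] by (simp add: rf_eval_uminus)

lemma rf_eval_0 [simp]: "rf_eval 0 w = 0"
  by (simp add: rf_eval_def)

lemma rf_eval_1 [simp]: "rf_eval 1 w = 1"
  by (simp add: rf_eval_def)

lemma rf_eval_sum:
  assumes "finite S"
  shows "\<forall>\<^sub>F w in cofinite. rf_eval (\<Sum>i\<in>S. f i) w = (\<Sum>i\<in>S. rf_eval (f i) w)"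
  using assms
proof (induction S rule: finite_induct)
  case (insert x S)
  from rf_eval_add[of "f x" "sum f S"] insert.IH show ?case
    by eventually_elim (simp add: insert.hyps)
qed simp

lemma rf_eval_prod:
  assumes "finite S"
  shows "\<forall>\<^sub>F w in cofinite. rf_eval (\<Prod>i\<in>S. f i) w = (\<Prod>i\<in>S. rf_eval (f i) w)"
  using assms
proof (induction S rule: finite_induct)
  case (insert x S)
  from rf_eval_mult[of "f x" "prod f S"] insert.IH show ?case
    by eventually_elim (simp add: insert.hyps)
qed simp

lemma rf_eval_nonzero:
  assumes "r \<noteq> 0"
  shows "\<forall>\<^sub>F w in cofinite. rf_eval r w \<noteq> 0"
proof -
  have "rf_num r \<noteq> 0" using assms by (simp add: rf_num_def)
  from eventually_cofinite_poly_nonzero[OF this] eventually_cofinite_rf_den_nonzero[of r]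
  show ?thesis
    by eventually_elim (simp add: rf_eval_num_den)
qed

lemma eventually_cofinite_compose_inj:
  assumes "\<forall>\<^sub>F z in cofinite. P z" "inj c"
  shows "\<forall>\<^sub>F w in cofinite. P (c w)"
  using assms finite_vimageI[of "{z. \<not> P z}" c] by (simp add: eventually_cofinite vimage_def)

lemma eventually_cofinite_neq: "\<forall>\<^sub>F w in cofinite. w \<noteq> a"
  by (simp add: eventually_cofinite)

lemma eventually_at_if_cofinite:
  assumes "\<forall>\<^sub>F z in cofinite. P z" "inj c"
  shows "\<forall>\<^sub>F w in at (x::complex). P (c w)"
proof -
  have "\<not> x islimpt {w. \<not> P (c w)}"
    using eventually_cofinite_compose_inj[OF assms] by (simp add: eventually_cofinite islimpt_finite)
  then show ?thesis
    by (simp add: islimpt_iff_eventually)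
qed

lemma inj_one_over: "inj (\<lambda>w::complex. 1 / w)"
  by (rule injI) (metis inverse_eq_divide inverse_inverse_eq)

lemma mat_eval_mult:
  fixes A B :: "ratfun ^'n ^'n"
  shows "\<forall>\<^sub>F w in cofinite. mat_eval (A ** B) w = mat_eval A w ** mat_eval B w"
proof -
  have "\<forall>\<^sub>F w in cofinite. rf_eval ((A ** B) $ i $ j) w = (mat_eval A w ** mat_eval B w) $ i $ j"
    for i j
  proof -
    have "\<forall>\<^sub>F w in cofinite. \<forall>k.
        rf_eval (A $ i $ k * B $ k $ j) w = rf_eval (A $ i $ k) w * rf_eval (B $ k $ j) w"
      by (intro eventually_all_finite rf_eval_mult)
    moreover have "\<forall>\<^sub>F w in cofinite. rf_eval (\<Sum>k\<in>UNIV. A $ i $ k * B $ k $ j) w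
        = (\<Sum>k\<in>UNIV. rf_eval (A $ i $ k * B $ k $ j) w)"
      by (rule rf_eval_sum) simp
    ultimately show ?thesis
      by eventually_elim (simp add: matrix_matrix_mult_def mat_eval_def)
  qed
  then have "\<forall>\<^sub>F w in cofinite. \<forall>i j.
      rf_eval ((A ** B) $ i $ j) w = (mat_eval A w ** mat_eval B w) $ i $ j"
    by (intro eventually_all_finite)
  then show ?thesis
    by eventually_elim (simp add: vec_eq_iff mat_eval_def)
qed

lemma mat_eval_det:
  fixes A :: "ratfun ^'n ^'n"
  shows "\<forall>\<^sub>F w in cofinite. rf_eval (det A) w = det (mat_eval A w)"
proof -
  let ?P = "{\<sigma>. \<sigma> permutes (UNIV :: 'n set)}"
  have fin: "finite ?P" by (simp add: finite_permutations)
  have sign: "rf_eval (of_int (sign \<sigma>)) w = of_int (sign \<sigma>)" for \<sigma> :: "'n \<Rightarrow> 'n" and w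
    by (simp add: sign_def rf_eval_uminus)
  have "\<forall>\<^sub>F w in cofinite. rf_eval (of_int (sign \<sigma>) * (\<Prod>i\<in>UNIV. A $ i $ \<sigma> i)) w
          = of_int (sign \<sigma>) * (\<Prod>i\<in>UNIV. rf_eval (A $ i $ \<sigma> i) w)" for \<sigma> :: "'n \<Rightarrow> 'n"
  proof -
    have "\<forall>\<^sub>F w in cofinite. rf_eval (\<Prod>i\<in>UNIV. A $ i $ \<sigma> i) w = (\<Prod>i\<in>UNIV. rf_eval (A $ i $ \<sigma> i) w)"
      by (rule rf_eval_prod) simp
    with rf_eval_mult[of "of_int (sign \<sigma>)" "\<Prod>i\<in>UNIV. A $ i $ \<sigma> i"] show ?thesis
      by eventually_elim (simp add: sign)
  qed
  then have "\<forall>\<^sub>F w in cofinite. \<forall>\<sigma>. rf_eval (of_int (sign \<sigma>) * (\<Prod>i\<in>UNIV. A $ i $ \<sigma> i)) w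
          = of_int (sign \<sigma>) * (\<Prod>i\<in>UNIV. rf_eval (A $ i $ \<sigma> i) w)"
    by (intro eventually_all_finite)
  with rf_eval_sum[OF fin, of "\<lambda>\<sigma>. of_int (sign \<sigma>) * (\<Prod>i\<in>UNIV. A $ i $ \<sigma> i)"] show ?thesis
    unfolding det_def by eventually_elim (simp add: mat_eval_def)
qed

lemma mat_eval_matrix_inv:
  fixes R :: "ratfun ^'n ^'n"
  assumes "invertible R"
  shows "\<forall>\<^sub>F w in cofinite. mat_eval (matrix_inv R) w = matrix_inv (mat_eval R w)"
  using mat_eval_mult[of R "matrix_inv R"]
proof eventually_elim
  case (elim w)
  have "mat_eval R w ** mat_eval (matrix_inv R) w = mat_eval (mat 1) w"
    using elim by (simp add: matrix_inv_right assms)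
  also have "\<dots> = mat 1"
    by (simp add: mat_eval_def mat_def vec_eq_iff)
  finally have "mat_eval R w ** mat_eval (matrix_inv R) w = mat 1" .
  then show ?case
    by (simp add: matrix_inv_unique)
qed

lemma finite_power_preimage:
  assumes "finite S" "p \<ge> 1"
  shows "finite {w::complex. w ^ p \<in> S}"
proof -
  have "finite {w::complex. w ^ p = s}" for s
  proof -
    have "coeff (monom 1 p - [:s:]) p = 1"
      using assms(2) by (cases p) auto
    then have "monom 1 p - [:s:] \<noteq> 0"
      by (metis coeff_0 zero_neq_one)
    then have "finite {w. poly (monom 1 p - [:s:]) w = 0}"
      by (rule poly_roots_finite)
    then show ?thesis
      by (simp add: poly_monom)
  qed
  moreover have "{w::complex. w ^ p \<in> S} = (\<Union>s\<in>S. {w. w ^ p = s})"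
    by auto
  ultimately show ?thesis
    using assms(1) by simp
qed

lemma eventually_cofinite_power:
  assumes "\<forall>\<^sub>F z in cofinite. P z" "p \<ge> 1"
  shows "\<forall>\<^sub>F w in cofinite. P ((w::complex) ^ p)"
  using finite_power_preimage[of "{z. \<not> P z}" p] assms
  by (simp add: eventually_cofinite)

lemma rf_eval_phi_rf:
  assumes "p \<ge> 1"
  shows "\<forall>\<^sub>F w in cofinite. rf_eval (phi_rf p r) w = rf_eval r (w ^ p)"
proof -
  have "degree (monom (1::complex) p) > 0"
    using assms by (simp add: degree_monom_eq)
  then have "pcompose (rf_den r) (monom 1 p) \<noteq> 0"
    by (simp add: pcompose_eq_0_iff)
  from eventually_cofinite_poly_nonzero[OF this] show ?thesis
  proof eventually_elim
    case (elim w)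
    have "phi_rf p r = Fract (pcompose (rf_num r) (monom 1 p)) (pcompose (rf_den r) (monom 1 p))"
      by (simp add: phi_rf_def rf_num_def rf_den_def split: prod.splits)
    then have "rf_eval (phi_rf p r) w =
        poly (pcompose (rf_num r) (monom 1 p)) w / poly (pcompose (rf_den r) (monom 1 p)) w"
      using rf_eval_Fract[OF elim] by simp
    then show ?case
      by (simp add: poly_pcompose poly_monom rf_eval_num_den)
  qed
qed

lemma mat_eval_phi_mat:
  assumes "p \<ge> 1"
  shows "\<forall>\<^sub>F w in cofinite. mat_eval (phi_mat p R) w = mat_eval R (w ^ p)"
proof -
  have "\<forall>\<^sub>F w in cofinite. \<forall>i j. rf_eval (phi_rf p (R $ i $ j)) w = rf_eval (R $ i $ j) (w ^ p)"
    by (intro eventually_all_finite rf_eval_phi_rf assms)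
  then show ?thesis
    by eventually_elim (simp add: mat_eval_def phi_mat_def vec_eq_iff)
qed

lemma invertible_phi_mat:
  fixes R :: "ratfun ^'n ^'n"
  assumes "invertible R" "p \<ge> 1"
  shows "invertible (phi_mat p R)"
proof -
  have "det R \<noteq> 0"
    using assms(1) by (simp add: invertible_det_nz)
  have "\<forall>\<^sub>F w in cofinite. rf_eval (det (phi_mat p R)) w \<noteq> 0"
    using mat_eval_det[of "phi_mat p R"] mat_eval_phi_mat[OF assms(2), of R]
      eventually_cofinite_power[OF mat_eval_det[of R] assms(2)]
      eventually_cofinite_power[OF rf_eval_nonzero[OF \<open>det R \<noteq> 0\<close>] assms(2)]
    by eventually_elim simp
  from eventually_happens'[OF _ this] obtain w where "rf_eval (det (phi_mat p R)) w \<noteq> 0"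
    by (auto simp: infinite_UNIV_char_0)
  then show ?thesis
    by (auto simp: invertible_det_nz)
qed

lemma mat_eval_gauge_transform:
  fixes R A :: "ratfun ^'n ^'n"
  assumes "invertible R" "p \<ge> 1"
  shows "\<forall>\<^sub>F w in cofinite. mat_eval (matrix_inv (phi_mat p R) ** A ** R) w
           = matrix_inv (mat_eval R (w ^ p)) ** mat_eval A w ** mat_eval R w"
  using mat_eval_mult[of "matrix_inv (phi_mat p R) ** A" R]
    mat_eval_mult[of "matrix_inv (phi_mat p R)" A]
    mat_eval_matrix_inv[OF invertible_phi_mat[OF assms]] mat_eval_phi_mat[OF assms(2), of R]
  by eventually_elim simp

section \<open>Order of vanishing at a point\<close>

(* N may be negative, so order_ge f x N also bounds the order of a pole. *)
definition order_ge :: "(complex \<Rightarrow> complex) \<Rightarrow> complex \<Rightarrow> int \<Rightarrow> bool" where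
  "order_ge f x N \<longleftrightarrow> (\<exists>h. h analytic_on {x} \<and> (\<forall>\<^sub>F w in at x. f w = (w - x) powi N * h w))"

lemma order_geI:
  "h analytic_on {x} \<Longrightarrow> (\<forall>\<^sub>F w in at x. f w = (w - x) powi N * h w) \<Longrightarrow> order_ge f x N"
  unfolding order_ge_def by blast

lemma order_geE:
  assumes "order_ge f x N"
  obtains h where "h analytic_on {x}" "\<forall>\<^sub>F w in at x. f w = (w - x) powi N * h w"
  using assms unfolding order_ge_def by blast

lemma order_ge_cong:
  assumes "order_ge f x N" "\<forall>\<^sub>F w in at x. f w = g w"
  shows "order_ge g x N"
proof -
  obtain h where "h analytic_on {x}" "\<forall>\<^sub>F w in at x. f w = (w - x) powi N * h w"
    using assms(1) by (rule order_geE)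
  with assms(2) show ?thesis
    by (auto intro!: order_geI elim: eventually_elim2)
qed

lemma order_ge_mono:
  assumes "order_ge f x N" "M \<le> N"
  shows "order_ge f x M"
proof -
  obtain h where h: "h analytic_on {x}" "\<forall>\<^sub>F w in at x. f w = (w - x) powi N * h w"
    using assms(1) by (rule order_geE)
  show ?thesis
  proof (rule order_geI)
    show "(\<lambda>w. (w - x) ^ nat (N - M) * h w) analytic_on {x}"
      by (intro analytic_intros h(1))
    show "\<forall>\<^sub>F w in at x. f w = (w - x) powi M * ((w - x) ^ nat (N - M) * h w)"
      using h(2) eventually_neq_at_within[of x x]
    proof eventually_elim
      case (elim w)
      have "(w - x) powi N = (w - x) powi M * (w - x) powi (N - M)"
        using elim(2) by (simp flip: power_int_add)
      moreover have "(w - x) powi (N - M) = (w - x) ^ nat (N - M)"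
        using assms(2) by (simp add: power_int_def)
      ultimately show ?case
        using elim(1) by (simp add: mult.assoc)
    qed
  qed
qed

lemma order_ge_add:
  assumes "order_ge f x N" "order_ge g x N"
  shows "order_ge (\<lambda>w. f w + g w) x N"
proof -
  obtain h k where "h analytic_on {x}" "\<forall>\<^sub>F w in at x. f w = (w - x) powi N * h w"
    and "k analytic_on {x}" "\<forall>\<^sub>F w in at x. g w = (w - x) powi N * k w"
    using assms by (elim order_geE)
  then show ?thesis
    by (intro order_geI[of "\<lambda>w. h w + k w"] analytic_intros)
       (auto elim: eventually_elim2 simp: distrib_left)
qed

lemma order_ge_uminus:
  assumes "order_ge f x N"
  shows "order_ge (\<lambda>w. - f w) x N"
proof -
  obtain h where "h analytic_on {x}" "\<forall>\<^sub>F w in at x. f w = (w - x) powi N * h w"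
    using assms by (rule order_geE)
  then show ?thesis
    by (intro order_geI[of "\<lambda>w. - h w"] analytic_intros) (auto elim: eventually_mono)
qed

lemma order_ge_mult:
  assumes "order_ge f x N" "order_ge g x M"
  shows "order_ge (\<lambda>w. f w * g w) x (N + M)"
proof -
  obtain h k where "h analytic_on {x}" "\<forall>\<^sub>F w in at x. f w = (w - x) powi N * h w"
    and "k analytic_on {x}" "\<forall>\<^sub>F w in at x. g w = (w - x) powi M * k w"
    using assms by (elim order_geE)
  moreover have "\<forall>\<^sub>F w in at x. f w * g w = (w - x) powi (N + M) * (h w * k w)"
    using calculation(2,4) eventually_neq_at_within[of x x]
    by eventually_elim (simp add: power_int_add)
  ultimately show ?thesis
    by (intro order_geI[of "\<lambda>w. h w * k w"] analytic_intros)
qed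

lemma order_ge_analytic: "f analytic_on {x} \<Longrightarrow> order_ge f x 0"
  by (rule order_geI[of f]) auto

lemma order_ge_0_fun: "order_ge (\<lambda>w. 0) x N"
  by (rule order_geI[of "\<lambda>w. 0"]) auto

lemma order_ge_sum:
  assumes "finite S" "\<And>i. i \<in> S \<Longrightarrow> order_ge (f i) x N"
  shows "order_ge (\<lambda>w. \<Sum>i\<in>S. f i w) x N"
  using assms
  by (induction S rule: finite_induct) (auto intro: order_ge_0_fun order_ge_add)

lemma order_ge_power_int: "order_ge (\<lambda>w. (w - x) powi N) x N"
  by (rule order_geI[of "\<lambda>w. 1"]) auto

lemma meromorphic_eventually_nonzero:
  assumes "f meromorphic_on {x}" "\<not> (\<forall>\<^sub>F w in at x. f w = 0)"
  shows "\<forall>\<^sub>F w in at x. f w \<noteq> 0"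
  using assms not_essential_frequently_0_imp_eventually_0[of f x]
  by (auto simp: meromorphic_at_iff frequently_def)

lemma meromorphic_imp_order_ge:
  assumes "f meromorphic_on {x}"
  shows "\<exists>N. order_ge f x N"
proof (cases "\<forall>\<^sub>F w in at x. f w = 0")
  case True
  then show ?thesis
    using order_ge_cong[OF order_ge_0_fun] by (metis (mono_tags, lifting) eventually_mono)
next
  case False
  then have "\<exists>\<^sub>F w in at x. f w \<noteq> 0"
    by (simp add: not_eventually)
  with zorder_exist[of f x] assms obtain r where r: "r > 0" "zor_poly f x holomorphic_on cball x r"
    "\<forall>w\<in>cball x r - {x}. f w = zor_poly f x w * (w - x) powi (zorder f x)"
    by (auto simp: meromorphic_at_iff)
  have "zor_poly f x analytic_on {x}"
    using r(1,2) by (meson analytic_on_open centre_in_ball holomorphic_on_subset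
        ball_subset_cball open_ball analytic_on_subset empty_subsetI insert_subset)
  moreover have "\<forall>\<^sub>F w in at x. w \<in> ball x r - {x}"
    using eventually_at_in_open'[of "ball x r" x] eventually_neq_at_within[of x x UNIV] r(1)
    by (auto simp: eventually_conj_iff)
  then have "\<forall>\<^sub>F w in at x. f w = (w - x) powi (zorder f x) * zor_poly f x w"
    by eventually_elim (use r(3) in \<open>auto simp: mult.commute\<close>)
  ultimately show ?thesis
    by (auto intro: order_geI)
qed

lemma analytic_taylor_order_ge:
  assumes "h analytic_on {x}"
  shows "\<exists>q. order_ge (\<lambda>w. h w - poly q (w - x)) x (int n)"
proof (induction n)
  case 0
  show ?case
    using order_ge_analytic[OF assms] by (intro exI[of _ 0]) simp
next
  case (Suc n)
  then obtain q k where k: "k analytic_on {x}"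
    "\<forall>\<^sub>F w in at x. h w - poly q (w - x) = (w - x) powi int n * k w"
    by (auto elim: order_geE)
  then obtain e where e: "e > 0" "k holomorphic_on ball x e"
    by (auto simp: analytic_on_def)
  define k1 where "k1 w = (if w = x then deriv k x else (k w - k x) / (w - x))" for w
  have "k1 holomorphic_on ball x e"
    unfolding k1_def by (rule pole_lemma_open[OF e(2)]) (use e in simp_all)
  then have "k1 analytic_on {x}"
    using e(1) analytic_on_open analytic_on_subset by (metis centre_in_ball empty_subsetI
        insert_subset open_ball)
  moreover have "\<forall>\<^sub>F w in at x.
      h w - poly (q + monom (k x) n) (w - x) = (w - x) powi int (Suc n) * k1 w"
    using k(2) eventually_neq_at_within[of x x]
  proof eventually_elim
    case (elim w)
    then have "h w - poly (q + monom (k x) n) (w - x) = (w - x) ^ n * (k w - k x)"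
      by (simp add: poly_monom algebra_simps)
    also have "\<dots> = (w - x) ^ Suc n * k1 w"
      using elim(2) by (simp add: k1_def)
    finally show ?case
      by (simp only: power_int_of_nat)
  qed
  ultimately show ?case
    by (blast intro: order_geI)
qed

lemma meromorphic_laurent_truncation:
  assumes "f meromorphic_on {x}"
  shows "\<exists>k q. order_ge (\<lambda>w. f w - poly q (w - x) / (w - x) ^ k) x N"
proof -
  obtain M h where h: "h analytic_on {x}" "\<forall>\<^sub>F w in at x. f w = (w - x) powi M * h w"
    using meromorphic_imp_order_ge[OF assms] by (auto elim: order_geE)
  define k where "k = nat (- M)"
  define g where "g w = (w - x) ^ nat M * h w" for w
  have "g analytic_on {x}"
    unfolding g_def by (intro analytic_intros h(1))
  then obtain q where q: "order_ge (\<lambda>w. g w - poly q (w - x)) x (int (nat (N + int k)))"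
    using analytic_taylor_order_ge by blast
  have "order_ge (\<lambda>w. (g w - poly q (w - x)) * (w - x) powi (- int k)) x N"
    using order_ge_mult[OF q order_ge_power_int] by (rule order_ge_mono) simp
  moreover have "\<forall>\<^sub>F w in at x.
      (g w - poly q (w - x)) * (w - x) powi (- int k) = f w - poly q (w - x) / (w - x) ^ k"
    using h(2) eventually_neq_at_within[of x x UNIV]
  proof eventually_elim
    case (elim w)
    have "(w - x) powi M = (w - x) powi (int (nat M) + - int k)"
      by (simp add: k_def)
    also have "\<dots> = (w - x) powi int (nat M) * (w - x) powi (- int k)"
      by (rule power_int_add) (use elim(2) in simp)
    also have "\<dots> = (w - x) ^ nat M * (w - x) powi (- int k)"
      by (simp only: power_int_of_nat)
    finally
    have "(w - x) powi M = (w - x) ^ nat M * (w - x) powi (- int k)" .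
    with elim(1) show ?case
      by (simp add: g_def power_int_minus divide_inverse algebra_simps)
  qed
  ultimately show ?thesis
    by (blast intro: order_ge_cong)
qed

lemma rational_approx_at:
  assumes "f meromorphic_on {x}"
  shows "\<exists>l. order_ge (\<lambda>w. rf_eval l w - f w) x N"
proof -
  obtain k q where kq: "order_ge (\<lambda>w. f w - poly q (w - x) / (w - x) ^ k) x N"
    using meromorphic_laurent_truncation[OF assms] by blast
  define l where "l = Fract (pcompose q [:-x, 1:]) ([:-x, 1:] ^ k)"
  have l: "rf_eval l w = poly q (w - x) / (w - x) ^ k" if "w \<noteq> x" for w
    using that unfolding l_def
    by (subst rf_eval_Fract) (simp_all add: poly_pcompose)
  have "\<forall>\<^sub>F w in at x. - (f w - poly q (w - x) / (w - x) ^ k) = rf_eval l w - f w"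
    using eventually_neq_at_within[of x x UNIV] by eventually_elim (simp add: l)
  then have "order_ge (\<lambda>w. rf_eval l w - f w) x N"
    by (rule order_ge_cong[OF order_ge_uminus[OF kq]])
  then show ?thesis ..
qed

lemma rational_approx_at_infinity:
  assumes "f meromorphic_on {0}"
  shows "\<exists>l. order_ge (\<lambda>w. rf_eval l (1 / w) - f w) 0 N"
proof -
  obtain k q where kq: "order_ge (\<lambda>w. f w - poly q (w - 0) / (w - 0) ^ k) 0 N"
    using meromorphic_laurent_truncation[OF assms] by blast
  define l where "l = Fract (reflect_poly q * monom 1 k) (monom 1 (degree q))"
  have l: "rf_eval l (1 / w) = poly q w / w ^ k" if "w \<noteq> 0" for w
  proof -
    have "rf_eval l (1 / w) = poly (reflect_poly q * monom 1 k) (1 / w) / (1 / w) ^ degree q"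
      unfolding l_def using that by (subst rf_eval_Fract) (simp_all add: poly_monom)
    also have "\<dots> = poly q w / w ^ k"
      using that by (simp add: poly_reflect_poly_nz poly_monom field_simps)
    finally show ?thesis .
  qed
  have "\<forall>\<^sub>F w in at 0. - (f w - poly q (w - 0) / (w - 0) ^ k) = rf_eval l (1 / w) - f w"
    using eventually_neq_at_within[of 0 0 UNIV] by eventually_elim (simp add: l)
  then have "order_ge (\<lambda>w. rf_eval l (1 / w) - f w) 0 N"
    by (rule order_ge_cong[OF order_ge_uminus[OF kq]])
  then show ?thesis ..
qed

lemma meromorphic_rf_eval: "rf_eval r meromorphic_on {x}"
proof -
  have "(\<lambda>w. poly (rf_num r) w / poly (rf_den r) w) meromorphic_on {x}"
    by (simp only: poly_altdef) (intro meromorphic_intros)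
  then show ?thesis
    by (simp add: rf_eval_num_den [abs_def])
qed

lemma meromorphic_rf_eval_at_infinity: "(\<lambda>w. rf_eval r (1 / w)) meromorphic_on {0}"
proof -
  have "(\<lambda>w::complex. poly (rf_num r) (1 / w) / poly (rf_den r) (1 / w)) meromorphic_on {0}"
    by (simp only: poly_altdef) (intro meromorphic_intros)
  then show ?thesis
    by (simp add: rf_eval_num_den)
qed

section \<open>Simultaneous rational approximation at 0, 1 and infinity\<close>

definition cutoff0 :: "nat \<Rightarrow> ratfun" where
  "cutoff0 M = Fract ([:1, -1:] ^ M) ([:1, -1:] ^ M + monom 1 (2 * M))"

definition cutoff_inf :: "nat \<Rightarrow> ratfun" where
  "cutoff_inf M = Fract (monom 1 M * [:-1, 1:] ^ M) (monom 1 M * [:-1, 1:] ^ M + 1)"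

lemma rf_eval_cutoff0:
  "\<forall>\<^sub>F w in cofinite. (1 - w) ^ M + w ^ (2 * M) \<noteq> 0 \<and>
     rf_eval (cutoff0 M) w = (1 - w) ^ M / ((1 - w) ^ M + w ^ (2 * M))"
proof -
  have poly_D: "poly ([:1, -1:] ^ M + monom 1 (2 * M)) w = (1 - w) ^ M + w ^ (2 * M)"
    for w :: complex
    by (simp add: poly_monom)
  have "poly ([:1, -1:] ^ M + monom 1 (2 * M)) 0 \<noteq> (0::complex)"
    by (cases M) (simp_all add: poly_monom)
  then have "[:1, -1:] ^ M + monom 1 (2 * M) \<noteq> (0::complex poly)"
    by (metis poly_0)
  from eventually_cofinite_poly_nonzero[OF this] show ?thesis
    by eventually_elim (simp add: cutoff0_def rf_eval_Fract poly_D poly_monom)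
qed

lemma rf_eval_cutoff_inf:
  "\<forall>\<^sub>F w in cofinite. w ^ M * (w - 1) ^ M + 1 \<noteq> 0 \<and>
     rf_eval (cutoff_inf M) w = w ^ M * (w - 1) ^ M / (w ^ M * (w - 1) ^ M + 1)"
proof -
  have poly_D: "poly (monom 1 M * [:-1, 1:] ^ M + 1) w = w ^ M * (w - 1) ^ M + 1" for w :: complex
    by (simp add: poly_monom)
  have "poly (monom 1 M * [:-1, 1:] ^ M + 1) 0 \<noteq> (0::complex)"
    by (cases M) (simp_all add: poly_monom)
  then have "monom 1 M * [:-1, 1:] ^ M + 1 \<noteq> (0::complex poly)"
    by (metis poly_0)
  from eventually_cofinite_poly_nonzero[OF this] show ?thesis
    by eventually_elim (simp add: cutoff_inf_def rf_eval_Fract poly_D poly_monom)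
qed

lemma order_ge_power_div:
  assumes "g analytic_on {x}" "d analytic_on {x}" "d x \<noteq> 0"
    and "\<forall>\<^sub>F w in at x. f w = (w - x) ^ n * g w / d w"
  shows "order_ge f x (int n)"
proof (rule order_geI)
  show "(\<lambda>w. g w / d w) analytic_on {x}"
    using assms(1-3) by (intro analytic_on_divide) auto
  show "\<forall>\<^sub>F w in at x. f w = (w - x) powi int n * (g w / d w)"
    using assms(4) by eventually_elim simp
qed

lemma rf_eval_cutoff0_inverse:
  "\<forall>\<^sub>F w in cofinite. rf_eval (cutoff0 M) (1 / w) = rf_eval (cutoff_inf M) w"
  using eventually_cofinite_compose_inj[OF rf_eval_cutoff0[of M] inj_one_over]
    rf_eval_cutoff_inf[of M] eventually_cofinite_neq[of 0]
proof eventually_elim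
  case (elim w)
  define a b where "a = (w - 1) ^ M" and "b = w ^ M"
  have "b \<noteq> 0"
    using elim(3) by (simp add: b_def)
  have "1 - 1 / w = (w - 1) / w"
    using elim(3) by (simp add: diff_divide_distrib)
  then have "(1 - 1 / w) ^ M = a / b"
    by (simp add: a_def b_def power_divide)
  moreover have "(1 / w) ^ (2 * M) = 1 / (b * b)"
    by (simp add: b_def power_one_over mult_2 power_add)
  ultimately have "rf_eval (cutoff0 M) (1 / w)
      = (a / b * (b * b)) / ((a / b + 1 / (b * b)) * (b * b))"
    using elim(1) \<open>b \<noteq> 0\<close> by (simp only: mult_divide_mult_cancel_right mult_eq_0_iff simp_thms)
  also have "\<dots> = a * b / (a * b + 1)"
    using \<open>b \<noteq> 0\<close> by (simp add: distrib_right)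
  finally show ?case
    using elim(2) by (simp add: a_def b_def mult.commute)
qed

lemma rf_eval_cutoff_inf_inverse:
  "\<forall>\<^sub>F w in cofinite. rf_eval (cutoff_inf M) (1 / w) = rf_eval (cutoff0 M) w"
  using eventually_cofinite_compose_inj[OF rf_eval_cutoff0_inverse[of M] inj_one_over]
  by eventually_elim simp

lemma order_ge_cutoff0:
  assumes "M \<ge> 1"
  shows "order_ge (\<lambda>w. rf_eval (cutoff0 M) w - 1) 0 M"
    and "order_ge (rf_eval (cutoff0 M)) 1 M"
proof -
  have "order_ge (\<lambda>w. rf_eval (cutoff0 M) w - 1) 0 (int (2 * M))"
  proof (rule order_ge_power_div)
    show "\<forall>\<^sub>F w in at 0.
        rf_eval (cutoff0 M) w - 1 = (w - 0) ^ (2 * M) * - 1 / ((1 - w) ^ M + w ^ (2 * M))"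
      using eventually_at_if_cofinite[OF rf_eval_cutoff0[of M] inj_on_id2]
      by eventually_elim (simp add: field_simps)
  qed (use assms in \<open>auto intro!: analytic_intros simp: power_0_left\<close>)
  then show "order_ge (\<lambda>w. rf_eval (cutoff0 M) w - 1) 0 M"
    by (rule order_ge_mono) simp
  show "order_ge (rf_eval (cutoff0 M)) 1 M"
  proof (rule order_ge_power_div)
    show "\<forall>\<^sub>F w in at 1.
        rf_eval (cutoff0 M) w = (w - 1) ^ M * (- 1) ^ M / ((1 - w) ^ M + w ^ (2 * M))"
      using eventually_at_if_cofinite[OF rf_eval_cutoff0[of M] inj_on_id2]
      by eventually_elim (simp add: power_mult_distrib[symmetric])
  qed (use assms in \<open>auto intro!: analytic_intros simp: power_0_left\<close>)
qed

lemma order_ge_cutoff_inf: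
  assumes "M \<ge> 1"
  shows "order_ge (rf_eval (cutoff_inf M)) 0 M"
    and "order_ge (rf_eval (cutoff_inf M)) 1 M"
proof -
  show "order_ge (rf_eval (cutoff_inf M)) 0 M"
  proof (rule order_ge_power_div)
    show "\<forall>\<^sub>F w in at 0.
        rf_eval (cutoff_inf M) w = (w - 0) ^ M * (w - 1) ^ M / (w ^ M * (w - 1) ^ M + 1)"
      using eventually_at_if_cofinite[OF rf_eval_cutoff_inf[of M] inj_on_id2]
      by eventually_elim simp
  qed (use assms in \<open>auto intro!: analytic_intros simp: power_0_left\<close>)
  show "order_ge (rf_eval (cutoff_inf M)) 1 M"
  proof (rule order_ge_power_div)
    show "\<forall>\<^sub>F w in at 1.
        rf_eval (cutoff_inf M) w = (w - 1) ^ M * w ^ M / (w ^ M * (w - 1) ^ M + 1)"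
      using eventually_at_if_cofinite[OF rf_eval_cutoff_inf[of M] inj_on_id2]
      by eventually_elim (simp add: mult.commute)
  qed (use assms in \<open>auto intro!: analytic_intros simp: power_0_left\<close>)
qed

lemma order_ge_cutoffs_at_infinity:
  assumes "M \<ge> 1"
  shows "order_ge (\<lambda>w. rf_eval (cutoff0 M) (1 / w)) 0 M"
    and "order_ge (\<lambda>w. rf_eval (cutoff_inf M) (1 / w) - 1) 0 M"
proof -
  show "order_ge (\<lambda>w. rf_eval (cutoff0 M) (1 / w)) 0 M"
    by (rule order_ge_cong[OF order_ge_cutoff_inf(1)[OF assms]])
      (use eventually_at_if_cofinite[OF rf_eval_cutoff0_inverse[of M] inj_on_id2] in
        \<open>eventually_elim, simp\<close>)
  show "order_ge (\<lambda>w. rf_eval (cutoff_inf M) (1 / w) - 1) 0 M"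
    by (rule order_ge_cong[OF order_ge_cutoff0(1)[OF assms]])
      (use eventually_at_if_cofinite[OF rf_eval_cutoff_inf_inverse[of M] inj_on_id2] in
        \<open>eventually_elim, simp\<close>)
qed

lemma rational_order_bound:
  "\<exists>K. order_ge (rf_eval r) 0 K \<and> order_ge (rf_eval r) 1 K \<and> order_ge (\<lambda>w. rf_eval r (1 / w)) 0 K"
proof -
  obtain K0 K1 Ki where "order_ge (rf_eval r) 0 K0" "order_ge (rf_eval r) 1 K1"
    "order_ge (\<lambda>w. rf_eval r (1 / w)) 0 Ki"
    using meromorphic_imp_order_ge meromorphic_rf_eval meromorphic_rf_eval_at_infinity by metis
  then show ?thesis
    by (intro exI[of _ "min K0 (min K1 Ki)"]) (auto elim!: order_ge_mono)
qed

lemma order_ge_glue: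
  assumes "order_ge u x N" "order_ge a x M" "order_ge b x M" "order_ge c x K" "order_ge d x L"
    and "N \<le> M + K" "N \<le> M + L"
    and "\<forall>\<^sub>F w in at x. g w = u w + a w * c w + b w * d w"
  shows "order_ge g x N"
proof -
  have "order_ge (\<lambda>w. a w * c w) x N" "order_ge (\<lambda>w. b w * d w) x N"
    using order_ge_mult[OF assms(2,4)] order_ge_mult[OF assms(3,5)] assms(6,7)
    by (auto elim: order_ge_mono)
  with assms(1) have "order_ge (\<lambda>w. u w + a w * c w + b w * d w) x N"
    by (intro order_ge_add)
  then show ?thesis
    by (rule order_ge_cong) (use assms(8) in \<open>auto elim: eventually_mono\<close>)
qed

lemma rational_approx_0_1_infinity:
  assumes "f0 meromorphic_on {0}" "f1 meromorphic_on {1}" "fi meromorphic_on {0}"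
  shows "\<exists>r. order_ge (\<lambda>w. rf_eval r w - f0 w) 0 N \<and> order_ge (\<lambda>w. rf_eval r w - f1 w) 1 N \<and>
             order_ge (\<lambda>w. rf_eval r (1 / w) - fi w) 0 N"
proof -
  obtain l0 l1 li where l0: "order_ge (\<lambda>w. rf_eval l0 w - f0 w) 0 N"
    and l1: "order_ge (\<lambda>w. rf_eval l1 w - f1 w) 1 N"
    and li: "order_ge (\<lambda>w. rf_eval li (1 / w) - fi w) 0 N"
    using rational_approx_at[OF assms(1)] rational_approx_at[OF assms(2)]
      rational_approx_at_infinity[OF assms(3)] by metis
  define d0 di where "d0 = l0 - l1" and "di = li - l1"
  obtain K0 Ki where K0: "order_ge (rf_eval d0) 0 K0" "order_ge (rf_eval d0) 1 K0"
      "order_ge (\<lambda>w. rf_eval d0 (1 / w)) 0 K0"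
    and Ki: "order_ge (rf_eval di) 0 Ki" "order_ge (rf_eval di) 1 Ki"
      "order_ge (\<lambda>w. rf_eval di (1 / w)) 0 Ki"
    using rational_order_bound by metis
  define M where "M = nat (N - min K0 Ki) + 1"
  have "M \<ge> 1" and MK: "N \<le> int M + K0" "N \<le> int M + Ki"
    by (simp_all add: M_def, linarith+)
  note e0 = order_ge_cutoff0[OF \<open>M \<ge> 1\<close>] and ei = order_ge_cutoff_inf[OF \<open>M \<ge> 1\<close>]
    and e_inf = order_ge_cutoffs_at_infinity[OF \<open>M \<ge> 1\<close>]
  define r where "r = l1 + cutoff0 M * d0 + cutoff_inf M * di"
  have "\<forall>\<^sub>F z in cofinite. rf_eval r z = rf_eval l1 z + rf_eval (cutoff0 M) z * rf_eval d0 z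
      + rf_eval (cutoff_inf M) z * rf_eval di z
      \<and> rf_eval d0 z = rf_eval l0 z - rf_eval l1 z \<and> rf_eval di z = rf_eval li z - rf_eval l1 z"
    using rf_eval_add[of "l1 + cutoff0 M * d0" "cutoff_inf M * di"]
      rf_eval_add[of l1 "cutoff0 M * d0"]
      rf_eval_mult[of "cutoff0 M" d0] rf_eval_mult[of "cutoff_inf M" di]
      rf_eval_diff[of l0 l1] rf_eval_diff[of li l1]
    unfolding r_def d0_def di_def by eventually_elim simp
  note r = eventually_at_if_cofinite[OF this inj_on_id2]
    eventually_at_if_cofinite[OF this inj_one_over]
  have "order_ge (\<lambda>w. rf_eval r w - f0 w) 0 N"
    by (rule order_ge_glue[OF l0 e0(1) ei(1) K0(1) Ki(1) MK])
      (use r(1) in \<open>eventually_elim, simp add: algebra_simps\<close>)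
  moreover have "order_ge (\<lambda>w. rf_eval r w - f1 w) 1 N"
    by (rule order_ge_glue[OF l1 e0(2) ei(2) K0(2) Ki(2) MK])
      (use r(1) in \<open>eventually_elim, simp add: algebra_simps\<close>)
  moreover have "order_ge (\<lambda>w. rf_eval r (1 / w) - fi w) 0 N"
    by (rule order_ge_glue[OF li e_inf K0(3) Ki(3) MK])
      (use r(2) in \<open>eventually_elim, simp add: algebra_simps\<close>)
  ultimately show ?thesis
    by blast
qed

section \<open>Gauge transformations by jets\<close>

lemma analytic_det:
  fixes F :: "complex \<Rightarrow> complex ^'n ^'n"
  assumes "\<And>i j. (\<lambda>w. F w $ i $ j) analytic_on {x}"
  shows "(\<lambda>w. det (F w)) analytic_on {x}"
  unfolding det_def by (intro analytic_intros assms)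

lemma meromorphic_det:
  fixes F :: "complex \<Rightarrow> complex ^'n ^'n"
  assumes "\<And>i j. (\<lambda>w. F w $ i $ j) meromorphic_on {x}"
  shows "(\<lambda>w. det (F w)) meromorphic_on {x}"
  unfolding det_def by (intro meromorphic_intros assms)

lemma analytic_matrix_inv:
  fixes F :: "complex \<Rightarrow> complex ^'n ^'n"
  assumes "\<And>i j. (\<lambda>w. F w $ i $ j) analytic_on {x}" "det (F x) \<noteq> 0"
  shows "(\<lambda>w. matrix_inv (F w) $ k $ j) analytic_on {x}"
proof -
  let ?cramer =
    "\<lambda>w. det (\<chi> i l. if l = k then (if i = j then 1 else 0) else F w $ i $ l) / det (F w)"
  have det_analytic: "(\<lambda>w. det (F w)) analytic_on {x}"
    by (rule analytic_det[OF assms(1)])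
  have entries: "(\<lambda>w. (\<chi> i l. if l = k then (if i = j then 1 else 0) else F w $ i $ l) $ a $ b)
      analytic_on {x}" for a b
    by (cases "b = k") (simp_all add: assms)
  have cramer_analytic: "?cramer analytic_on {x}"
    by (intro analytic_on_divide analytic_det entries det_analytic) (use assms(2) in auto)
  have "(\<lambda>w. det (F w)) \<midarrow>x\<rightarrow> det (F x)"
    using analytic_at_imp_isCont[OF det_analytic] by (simp add: isCont_def)
  then have "((\<lambda>w. det (F w)) \<longlongrightarrow> det (F x)) (nhds x)"
    by (rule tendsto_at_iff_tendsto_nhds[THEN iffD1])
  then have "\<forall>\<^sub>F w in nhds x. det (F w) \<noteq> 0"
    using assms(2) by (rule tendsto_imp_eventually_ne)
  then have "\<forall>\<^sub>F w in nhds x. ?cramer w = matrix_inv (F w) $ k $ j"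
    by eventually_elim (simp add: matrix_inv_cramer)
  from analytic_at_cong[OF this refl] cramer_analytic show ?thesis
    by blast
qed

lemma meromorphic_matrix_inv:
  fixes F :: "complex \<Rightarrow> complex ^'n ^'n"
  assumes "\<And>i j. (\<lambda>w. F w $ i $ j) meromorphic_on {x}" "\<forall>\<^sub>F w in at x. det (F w) \<noteq> 0"
  shows "(\<lambda>w. matrix_inv (F w) $ k $ j) meromorphic_on {x}"
proof -
  let ?cramer =
    "\<lambda>w. det (\<chi> i l. if l = k then (if i = j then 1 else 0) else F w $ i $ l) / det (F w)"
  have entries: "(\<lambda>w. (\<chi> i l. if l = k then (if i = j then 1 else 0) else F w $ i $ l) $ a $ b)
      meromorphic_on {x}" for a b
    by (cases "b = k") (simp_all add: assms meromorphic_on_const)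
  have "?cramer meromorphic_on {x}"
    by (intro meromorphic_on_divide meromorphic_det entries assms(1))
  moreover have "\<forall>\<^sub>F w in at x. ?cramer w = matrix_inv (F w) $ k $ j"
    using assms(2) by eventually_elim (simp add: matrix_inv_cramer)
  then have "?cramer meromorphic_on {x} \<longleftrightarrow> (\<lambda>w. matrix_inv (F w) $ k $ j) meromorphic_on {x}"
    by (intro meromorphic_on_cong) auto
  ultimately show ?thesis
    by blast
qed

lemma meromorphic_matrix_order_bound:
  fixes F :: "complex \<Rightarrow> complex ^'n ^'n"
  assumes "\<And>i j. (\<lambda>w. F w $ i $ j) meromorphic_on {x}"
  shows "\<exists>K. \<forall>i j. order_ge (\<lambda>w. F w $ i $ j) x K"
proof -
  obtain order where order: "\<And>i j. order_ge (\<lambda>w. F w $ i $ j) x (order i j)"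
    using meromorphic_imp_order_ge[OF assms] by metis
  have "Min (range (case_prod order)) \<le> order i j" for i j
    by (rule Min_le) auto
  then show ?thesis
    using order order_ge_mono by blast
qed

lemma matrix_eq_mult_if_inv_mult_diff:
  fixes T R H :: "'a::field ^'n ^'n"
  assumes "invertible T" "matrix_inv T ** (R - T) = H - mat 1"
  shows "R = T ** H"
proof -
  have "T ** (H - mat 1) = (T ** matrix_inv T) ** (R - T)"
    using assms(2) by (simp add: matrix_mul_assoc[symmetric])
  also have "\<dots> = R - T"
    using assms(1) by (simp add: matrix_inv_right)
  finally have "T ** (H - mat 1) + T ** mat 1 = R"
    by simp
  then have "T ** (H - mat 1 + mat 1) = R"
    by (simp only: matrix_add_ldistrib)
  then show ?thesis
    by simp
qed

lemma matrix_jet_factor: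
  fixes T R :: "complex \<Rightarrow> complex ^'n ^'n"
  assumes "\<forall>\<^sub>F w in at x. det (T w) \<noteq> 0"
    and "\<And>i j. order_ge (\<lambda>w. matrix_inv (T w) $ i $ j) x K"
    and "\<And>i j. order_ge (\<lambda>w. R w $ i $ j - T w $ i $ j) x (1 - K)"
  obtains H where "\<And>i j. (\<lambda>w. H w $ i $ j) analytic_on {x}" "H x = mat 1"
    "\<forall>\<^sub>F w in at x. R w = T w ** H w"
proof -
  \<comment> \<open>H = T^-1 R = I + T^-1 (R - T), and T^-1 (R - T) has order at least K + (1 - K) = 1\<close>
  have "order_ge (\<lambda>w. (matrix_inv (T w) ** (R w - T w)) $ i $ j) x 1" for i j
  proof -
    have "order_ge (\<lambda>w. \<Sum>k\<in>UNIV. matrix_inv (T w) $ i $ k * (R w $ k $ j - T w $ k $ j)) x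
        (K + (1 - K))"
      by (intro order_ge_sum order_ge_mult assms) auto
    then show ?thesis
      by (simp add: matrix_matrix_mult_def)
  qed
  then have "\<forall>i j. \<exists>h. h analytic_on {x} \<and>
      (\<forall>\<^sub>F w in at x. (matrix_inv (T w) ** (R w - T w)) $ i $ j = (w - x) * h w)"
    by (simp add: order_ge_def)
  then obtain h where h: "\<And>i j. h i j analytic_on {x}"
    "\<And>i j. \<forall>\<^sub>F w in at x. (matrix_inv (T w) ** (R w - T w)) $ i $ j = (w - x) * h i j w"
    by (auto simp: choice_iff)
  define H where "H w = (\<chi> i j. (if i = j then 1 else 0) + (w - x) * h i j w)" for w
  have "(\<lambda>w. H w $ i $ j) analytic_on {x}" for i j
    unfolding H_def vec_lambda_beta by (intro analytic_intros h(1))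
  moreover have "H x = mat 1"
    by (simp add: H_def mat_def vec_eq_iff)
  moreover have "\<forall>\<^sub>F w in at x. \<forall>i j. (matrix_inv (T w) ** (R w - T w)) $ i $ j = (w - x) * h i j w"
    by (intro eventually_all_finite h(2))
  with assms(1) have "\<forall>\<^sub>F w in at x. R w = T w ** H w"
  proof eventually_elim
    case (elim w)
    then have "matrix_inv (T w) ** (R w - T w) = H w - mat 1"
      by (simp add: vec_eq_iff H_def mat_def)
    with elim(1) show ?case
      by (simp add: matrix_eq_mult_if_inv_mult_diff invertible_det_nz)
  qed
  ultimately show ?thesis
    using that by blast
qed

lemma germ_regular_at_cong:
  assumes "germ_regular_at F x" "\<forall>\<^sub>F w in at x. F w = G w"
  shows "germ_regular_at G x"
proof -
  obtain H where "\<forall>i j. (\<lambda>w. H w $ i $ j) analytic_on {x}" "det (H x) \<noteq> 0"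
    "\<forall>\<^sub>F w in at x. F w = H w"
    using assms(1) unfolding germ_regular_at_def by blast
  moreover from this(3) assms(2) have "\<forall>\<^sub>F w in at x. G w = H w"
    by eventually_elim simp
  ultimately show ?thesis
    unfolding germ_regular_at_def by blast
qed

lemma analytic_matrix_mult:
  fixes F G :: "complex \<Rightarrow> complex ^'n ^'n"
  assumes "\<And>i j. (\<lambda>w. F w $ i $ j) analytic_on S" "\<And>i j. (\<lambda>w. G w $ i $ j) analytic_on S"
  shows "(\<lambda>w. (F w ** G w) $ i $ j) analytic_on S"
  unfolding matrix_matrix_mult_def by (simp, intro analytic_intros assms)

lemma eventually_det_nonzero_at:
  fixes F :: "complex \<Rightarrow> complex ^'n ^'n"
  assumes "\<And>i j. (\<lambda>w. F w $ i $ j) analytic_on {x}" "det (F x) \<noteq> 0"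
  shows "\<forall>\<^sub>F w in at x. det (F w) \<noteq> 0"
proof -
  have "(\<lambda>w. det (F w)) \<midarrow>x\<rightarrow> det (F x)"
    using analytic_at_imp_isCont[OF analytic_det[OF assms(1)]] by (simp add: isCont_def)
  then show ?thesis
    using assms(2) by (rule tendsto_imp_eventually_ne)
qed

lemma analytic_at_compose_power:
  assumes "f analytic_on {x}" "x ^ p = x"
  shows "(\<lambda>w. f (w ^ p)) analytic_on {x}"
proof -
  have "(f \<circ> (\<lambda>w. w ^ p)) analytic_on {x}"
  proof (rule analytic_on_compose)
    show "(\<lambda>w. w ^ p) analytic_on {x}"
      by (intro analytic_intros)
    show "f analytic_on (\<lambda>w. w ^ p) ` {x}"
      using assms by simp
  qed
  then show ?thesis
    by (simp add: o_def)
qed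

lemma germ_regular_at_analytic_gauge:
  fixes T H A :: "complex \<Rightarrow> complex ^'n ^'n"
  assumes reg: "germ_regular_at (\<lambda>w. matrix_inv (T (w ^ p)) ** A w ** T w) x"
    and H: "\<And>i j. (\<lambda>w. H w $ i $ j) analytic_on {x}" "det (H x) \<noteq> 0"
    and T: "\<forall>\<^sub>F w in at x. det (T w) \<noteq> 0"
    and p: "filterlim (\<lambda>w. w ^ p) (at x) (at x)" "x ^ p = x"
  shows "germ_regular_at (\<lambda>w. matrix_inv (T (w ^ p) ** H (w ^ p)) ** A w ** (T w ** H w)) x"
proof -
  obtain G where G: "\<And>i j. (\<lambda>w. G w $ i $ j) analytic_on {x}" "det (G x) \<noteq> 0"
    "\<forall>\<^sub>F w in at x. matrix_inv (T (w ^ p)) ** A w ** T w = G w"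
    using reg unfolding germ_regular_at_def by blast
  have Hp: "(\<lambda>w. H (w ^ p) $ i $ j) analytic_on {x}" for i j
    by (rule analytic_at_compose_power[OF H(1) p(2)])
  have "det (H (x ^ p)) \<noteq> 0"
    using H(2) p(2) by simp
  note Hp_inv = analytic_matrix_inv[of "\<lambda>w. H (w ^ p)", OF Hp this]
  define G' where "G' w = matrix_inv (H (w ^ p)) ** G w ** H w" for w
  have "(\<lambda>w. G' w $ i $ j) analytic_on {x}" for i j
    unfolding G'_def by (intro analytic_matrix_mult Hp_inv G(1) H(1))
  moreover have "det (G' x) \<noteq> 0"
    using G(2) H(2) by (simp add: G'_def p(2) det_conj_matrix_inv invertible_det_nz)
  moreover have "\<forall>\<^sub>F w in at x. matrix_inv (T (w ^ p) ** H (w ^ p)) ** A w ** (T w ** H w) = G' w"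
  proof -
    have "\<forall>\<^sub>F w in at x. det (T w) \<noteq> 0 \<and> det (H w) \<noteq> 0"
      using T eventually_det_nonzero_at[OF H] by (simp add: eventually_conj_iff)
    moreover from this have "\<forall>\<^sub>F w in at x. det (T (w ^ p)) \<noteq> 0 \<and> det (H (w ^ p)) \<noteq> 0"
      using p(1) unfolding filterlim_iff by blast
    ultimately show ?thesis
      using G(3)
    proof eventually_elim
      case (elim w)
      then have "matrix_inv (T (w ^ p) ** H (w ^ p))
          = matrix_inv (H (w ^ p)) ** matrix_inv (T (w ^ p))"
        by (simp add: matrix_inv_mult invertible_det_nz)
      then have "matrix_inv (T (w ^ p) ** H (w ^ p)) ** A w ** (T w ** H w)
          = matrix_inv (H (w ^ p)) ** (matrix_inv (T (w ^ p)) ** A w ** T w) ** H w"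
        by (simp add: matrix_mul_assoc)
      with elim(3) show ?case
        by (simp add: G'_def)
    qed
  qed
  ultimately show ?thesis
    unfolding germ_regular_at_def by blast
qed

lemma filterlim_power_at:
  assumes "p \<ge> 1" "x ^ p = (x::complex)"
  shows "filterlim (\<lambda>w. w ^ p) (at x) (at x)"
proof (rule filterlim_atI)
  show "((\<lambda>w. w ^ p) \<longlongrightarrow> x) (at x)"
    using tendsto_power[OF tendsto_ident_at[of x UNIV], of p] assms(2) by simp
  from eventually_at_if_cofinite[OF eventually_cofinite_power[OF eventually_cofinite_neq assms(1)]
      inj_on_id2]
  show "\<forall>\<^sub>F w in at x. w ^ p \<noteq> x" .
qed

lemma germ_regular_gauge_jet:
  fixes T A :: "complex \<Rightarrow> complex ^'n ^'n"
  assumes T: "\<And>i j. (\<lambda>w. T w $ i $ j) meromorphic_on {x}" "\<not> (\<forall>\<^sub>F w in at x. det (T w) = 0)"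
    and reg: "germ_regular_at (\<lambda>w. matrix_inv (T (w ^ p)) ** A w ** T w) x"
    and p: "p \<ge> 1" "x ^ p = x"
  shows "\<exists>N. \<forall>R. (\<forall>i j. order_ge (\<lambda>w. R w $ i $ j - T w $ i $ j) x N) \<longrightarrow>
           germ_regular_at (\<lambda>w. matrix_inv (R (w ^ p)) ** A w ** R w) x \<and>
           (\<forall>\<^sub>F w in at x. det (R w) \<noteq> 0)"
proof -
  have det_T: "\<forall>\<^sub>F w in at x. det (T w) \<noteq> 0"
    by (rule meromorphic_eventually_nonzero[OF meromorphic_det[OF T(1)] T(2)])
  obtain K where K: "\<forall>i j. order_ge (\<lambda>w. matrix_inv (T w) $ i $ j) x K"
    using meromorphic_matrix_order_bound[OF meromorphic_matrix_inv[OF T(1) det_T]] by blast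
  have "germ_regular_at (\<lambda>w. matrix_inv (R (w ^ p)) ** A w ** R w) x \<and>
        (\<forall>\<^sub>F w in at x. det (R w) \<noteq> 0)"
    if close: "\<forall>i j. order_ge (\<lambda>w. R w $ i $ j - T w $ i $ j) x (1 - K)" for R
  proof -
    obtain H where H: "\<And>i j. (\<lambda>w. H w $ i $ j) analytic_on {x}" "H x = mat 1"
      "\<forall>\<^sub>F w in at x. R w = T w ** H w"
      using matrix_jet_factor[OF det_T K[rule_format] close[rule_format]] by blast
    have det_H: "det (H x) \<noteq> 0"
      by (simp add: H(2))
    have lim: "filterlim (\<lambda>w. w ^ p) (at x) (at x)"
      by (rule filterlim_power_at[OF p])
    have "germ_regular_at (\<lambda>w. matrix_inv (T (w ^ p) ** H (w ^ p)) ** A w ** (T w ** H w)) x"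
      by (rule germ_regular_at_analytic_gauge[OF reg H(1) det_H det_T lim p(2)])
    moreover have "\<forall>\<^sub>F w in at x. R (w ^ p) = T (w ^ p) ** H (w ^ p)"
      using H(3) lim unfolding filterlim_iff by blast
    with H(3) have "\<forall>\<^sub>F w in at x. matrix_inv (T (w ^ p) ** H (w ^ p)) ** A w ** (T w ** H w)
        = matrix_inv (R (w ^ p)) ** A w ** R w"
      by eventually_elim simp
    ultimately have "germ_regular_at (\<lambda>w. matrix_inv (R (w ^ p)) ** A w ** R w) x"
      by (rule germ_regular_at_cong)
    moreover have "\<forall>\<^sub>F w in at x. det (R w) \<noteq> 0"
      using H(3) det_T eventually_det_nonzero_at[OF H(1) det_H]
      by eventually_elim (simp add: det_mul)
    ultimately show ?thesis ..
  qed
  then show ?thesis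
    by blast
qed

definition agrees_to_order ::
    "(complex \<Rightarrow> complex) \<Rightarrow> ratfun ^'n ^'n \<Rightarrow> (complex \<Rightarrow> complex ^'n ^'n) \<Rightarrow> complex \<Rightarrow> int \<Rightarrow> bool"
  where "agrees_to_order c R T x N \<longleftrightarrow>
    (\<forall>i j. order_ge (\<lambda>w. rf_eval (R $ i $ j) (c w) - T w $ i $ j) x N)"

lemma agrees_to_order_mono:
  "agrees_to_order c R T x N \<Longrightarrow> M \<le> N \<Longrightarrow> agrees_to_order c R T x M"
  unfolding agrees_to_order_def using order_ge_mono by blast

lemma reg_sing_chart_rational_gauge:
  fixes A :: "ratfun ^'n ^'n"
  assumes chart: "reg_sing_chart p A c x"
    and p: "p \<ge> 1" "x ^ p = x"
    and c: "inj c" "\<And>w. c (w ^ p) = c w ^ p"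
  shows "\<exists>T N. (\<forall>i j. (\<lambda>w. T w $ i $ j) meromorphic_on {x}) \<and>
    (\<forall>R. agrees_to_order c R T x N \<longrightarrow> invertible R \<and>
       germ_regular_at (\<lambda>w. mat_eval (matrix_inv (phi_mat p R) ** A ** R) (c w)) x)"
proof -
  obtain T where T: "\<And>i j. (\<lambda>w. T w $ i $ j) meromorphic_on {x}"
      "\<not> (\<forall>\<^sub>F w in at x. det (T w) = 0)"
    and reg: "germ_regular_at (\<lambda>w. matrix_inv (T (w ^ p)) ** mat_eval A (c w) ** T w) x"
    using chart unfolding reg_sing_chart_def by blast
  obtain N where N: "\<And>Rc. \<forall>i j. order_ge (\<lambda>w. Rc w $ i $ j - T w $ i $ j) x N \<Longrightarrow>
      germ_regular_at (\<lambda>w. matrix_inv (Rc (w ^ p)) ** mat_eval A (c w) ** Rc w) x \<and>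
      (\<forall>\<^sub>F w in at x. det (Rc w) \<noteq> 0)"
    using germ_regular_gauge_jet[OF T reg p] by blast
  have "invertible R \<and>
      germ_regular_at (\<lambda>w. mat_eval (matrix_inv (phi_mat p R) ** A ** R) (c w)) x"
    if "agrees_to_order c R T x N" for R
  proof -
    have "\<forall>i j. order_ge (\<lambda>w. mat_eval R (c w) $ i $ j - T w $ i $ j) x N"
      using that by (simp add: agrees_to_order_def mat_eval_def)
    from N[OF this] have reg_R: "germ_regular_at (\<lambda>w. matrix_inv (mat_eval R (c (w ^ p)))
        ** mat_eval A (c w) ** mat_eval R (c w)) x"
      and det_R: "\<forall>\<^sub>F w in at x. det (mat_eval R (c w)) \<noteq> 0"
      by auto
    have "\<forall>\<^sub>F w in at x. rf_eval (det R) (c w) \<noteq> 0"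
      using det_R eventually_at_if_cofinite[OF mat_eval_det[of R] c(1)] by eventually_elim simp
    from eventually_happens[OF this] have "det R \<noteq> 0"
      by auto
    then have "invertible R"
      by (simp add: invertible_det_nz)
    moreover have "\<forall>\<^sub>F w in at x.
        matrix_inv (mat_eval R (c (w ^ p))) ** mat_eval A (c w) ** mat_eval R (c w)
          = mat_eval (matrix_inv (phi_mat p R) ** A ** R) (c w)"
      using eventually_at_if_cofinite[OF mat_eval_gauge_transform[OF \<open>invertible R\<close> p(1), of A]
          c(1)]
      by eventually_elim (simp add: c(2))
    then have "germ_regular_at (\<lambda>w. mat_eval (matrix_inv (phi_mat p R) ** A ** R) (c w)) x"
      by (rule germ_regular_at_cong[OF reg_R])
    ultimately show ?thesis ..
  qed
  with T(1) show ?thesis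
    by blast
qed

lemma regular_singular_at_rational_gauge:
  assumes "regular_singular_at p A x" "p \<ge> 1" "x ^ p = x"
  obtains T N where "\<forall>i j. (\<lambda>w. T w $ i $ j) meromorphic_on {x}"
    "\<And>R. agrees_to_order (\<lambda>w. w) R T x N \<Longrightarrow>
       invertible R \<and> regular_at (matrix_inv (phi_mat p R) ** A ** R) x"
  using reg_sing_chart_rational_gauge[OF assms(1)[unfolded regular_singular_at_def] assms(2,3)
      inj_on_id2] that
  unfolding regular_at_def by blast

lemma regular_singular_at_infinity_rational_gauge:
  assumes "regular_singular_at_infinity p A" "p \<ge> 1"
  obtains T N where "\<forall>i j. (\<lambda>w. T w $ i $ j) meromorphic_on {0}"
    "\<And>R. agrees_to_order (\<lambda>w. 1 / w) R T 0 N \<Longrightarrow>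
       invertible R \<and> regular_at_infinity (matrix_inv (phi_mat p R) ** A ** R)"
proof -
  have zero: "(0::complex) ^ p = 0"
    using assms(2) by simp
  have chart: "1 / w ^ p = (1 / w) ^ p" for w :: complex
    by (simp add: power_one_over)
  from reg_sing_chart_rational_gauge[where c = "\<lambda>w. 1 / w",
      OF assms(1)[unfolded regular_singular_at_infinity_def] assms(2) zero inj_one_over chart]
  show ?thesis
  proof (elim exE conjE)
    fix T N
    assume T: "\<forall>i j. (\<lambda>w. T w $ i $ j) meromorphic_on {0}"
      and gauge: "\<forall>R. agrees_to_order (\<lambda>w. 1 / w) R T 0 N \<longrightarrow> invertible R \<and>
        germ_regular_at (\<lambda>w. mat_eval (matrix_inv (phi_mat p R) ** A ** R) (1 / w)) 0"
    show ?thesis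
      by (rule that[of T N, OF T]) (use gauge in \<open>simp add: regular_at_infinity_def\<close>)
  qed
qed

lemma rational_matrix_approx_0_1_infinity:
  fixes T0 T1 Ti :: "complex \<Rightarrow> complex ^'n ^'n"
  assumes "\<forall>i j. (\<lambda>w. T0 w $ i $ j) meromorphic_on {0}"
    and "\<forall>i j. (\<lambda>w. T1 w $ i $ j) meromorphic_on {1}"
    and "\<forall>i j. (\<lambda>w. Ti w $ i $ j) meromorphic_on {0}"
  obtains R :: "ratfun ^'n ^'n" where "agrees_to_order (\<lambda>w. w) R T0 0 N"
    "agrees_to_order (\<lambda>w. w) R T1 1 N" "agrees_to_order (\<lambda>w. 1 / w) R Ti 0 N"
proof -
  have "\<forall>i j. \<exists>r. order_ge (\<lambda>w. rf_eval r w - T0 w $ i $ j) 0 N \<and>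
      order_ge (\<lambda>w. rf_eval r w - T1 w $ i $ j) 1 N \<and>
      order_ge (\<lambda>w. rf_eval r (1 / w) - Ti w $ i $ j) 0 N"
    by (intro allI rational_approx_0_1_infinity) (use assms in auto)
  then obtain r where "\<forall>i j. order_ge (\<lambda>w. rf_eval (r i j) w - T0 w $ i $ j) 0 N \<and>
      order_ge (\<lambda>w. rf_eval (r i j) w - T1 w $ i $ j) 1 N \<and>
      order_ge (\<lambda>w. rf_eval (r i j) (1 / w) - Ti w $ i $ j) 0 N"
    by (auto simp: choice_iff)
  then show ?thesis
    using that[of "\<chi> i j. r i j"] by (simp add: agrees_to_order_def)
qed

theorem mainTheorem5:
  fixes p :: nat and A :: "ratfun ^'n ^'n"
  assumes "p \<ge> 2"
    and "invertible A"
    and "regular_singular_at p A 0"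
    and "regular_singular_at p A 1"
    and "regular_singular_at_infinity p A"
  shows "\<exists>R :: ratfun ^'n ^'n. invertible R \<and>
           (let B = matrix_inv (phi_mat p R) ** A ** R in
              regular_at B 0 \<and> regular_at B 1 \<and> regular_at_infinity B)"
proof -
  let ?B = "\<lambda>R. matrix_inv (phi_mat p R) ** A ** R"
  have p: "p \<ge> 1" "(0::complex) ^ p = 0" "(1::complex) ^ p = 1"
    using assms(1) by simp_all
  obtain T0 N0 where T0: "\<forall>i j. (\<lambda>w. T0 w $ i $ j) meromorphic_on {0}"
    and gauge0: "\<And>R. agrees_to_order (\<lambda>w. w) R T0 0 N0 \<Longrightarrow> invertible R \<and> regular_at (?B R) 0"
    using regular_singular_at_rational_gauge[OF assms(3) p(1,2)] by blast
  obtain T1 N1 where T1: "\<forall>i j. (\<lambda>w. T1 w $ i $ j) meromorphic_on {1}"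
    and gauge1: "\<And>R. agrees_to_order (\<lambda>w. w) R T1 1 N1 \<Longrightarrow> invertible R \<and> regular_at (?B R) 1"
    using regular_singular_at_rational_gauge[OF assms(4) p(1,3)] by blast
  obtain Ti Ni where Ti: "\<forall>i j. (\<lambda>w. Ti w $ i $ j) meromorphic_on {0}"
    and gauge_inf: "\<And>R. agrees_to_order (\<lambda>w. 1 / w) R Ti 0 Ni \<Longrightarrow>
      invertible R \<and> regular_at_infinity (?B R)"
    using regular_singular_at_infinity_rational_gauge[OF assms(5) p(1)] by blast
  define N where "N = max N0 (max N1 Ni)"
  obtain R where R: "agrees_to_order (\<lambda>w. w) R T0 0 N" "agrees_to_order (\<lambda>w. w) R T1 1 N"
    "agrees_to_order (\<lambda>w. 1 / w) R Ti 0 N"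
    using rational_matrix_approx_0_1_infinity[OF T0 T1 Ti] by blast
  have "agrees_to_order (\<lambda>w. w) R T0 0 N0" "agrees_to_order (\<lambda>w. w) R T1 1 N1"
    "agrees_to_order (\<lambda>w. 1 / w) R Ti 0 Ni"
    by (rule agrees_to_order_mono[OF R(1)] agrees_to_order_mono[OF R(2)]
        agrees_to_order_mono[OF R(3)], simp add: N_def)+
  with gauge0 gauge1 gauge_inf show ?thesis
    unfolding Let_def by blast
qed

end
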